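(* Let $\bm{Z}\in\{0,1\}^n$, $\bm{X}\in\mathbb{R}^{n\times p}$, fix $\sigma^2>0$, let $\bm{S}$ be an $n\times n$ symmetric positive semidefinite matrix, and for $\rho^2\ge0$ let $\bm{\Sigma}=\bm{\Sigma}(\rho^2)=\sigma^2\bm{I}_n+\rho^2\bm{S}$. Assume that $\bm{X}^T\bm{\Sigma}^{-1}\bm{X}$ is invertible and $\bm{Z}^T\bm{\Sigma}^{-1}(\bm{I}_n-\bm{X}(\bm{X}^T\bm{\Sigma}^{-1}\bm{X})^{-1}\bm{X}^T\bm{\Sigma}^{-1})\bm{Z}\neq0$ for all $\rho^2\ge0$. Define $$\Delta(\rho^2)=\frac{\bm{Z}^T\bm{\Sigma}^{-1}(\bm{I}_n-\bm{X}(\bm{X}^T\bm{\Sigma}^{-1}\bm{X})^{-1}\bm{X}^T\bm{\Sigma}^{-1})\bm{S}(\bm{I}_n-\bm{\Sigma}^{-1}\bm{X}(\bm{X}^T\bm{\Sigma}^{-1}\bm{X})^{-1}\bm{X}^T)\bm{\Sigma}^{-1}\bm{Z}}{\big(\bm{Z}^T\bm{\Sigma}^{-1}(\bm{I}_n-\bm{X}(\bm{X}^T\bm{\Sigma}^{-1}\bm{X})^{-1}\bm{X}^T\bm{\Sigma}^{-1})\bm{Z}\big)^2}$$ and $$D(\rho^2)=\big(\bm{Z}^T\bm{\Sigma}^{-1}(\bm{I}_n-\bm{X}(\bm{X}^T\bm{\Sigma}^{-1}\bm{X})^{-1}\bm{X}^T\bm{\Sigma}^{-1})\bm{Z}\big)^{-1}.$$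 Then $\Delta(\rho^2)$ is non-increasing in $\rho^2$ and $D(\rho^2)$ is non-decreasing in $\rho^2$.
   Context: $\Delta(\rho^2)$ equals the weighted sum of squared mean imbalances $\sum_k\lambda_k(\sum_{Z_i=1}w_iv_{ki}-\sum_{Z_i=0}w_iv_{ki})^2$ of the eigenvectors of $\bm{S}$ under the GLS implied weights $\bm{w}$, and $D(\rho^2)=\sum_iw_i^2$ is the weight dispersion, where $\bm{w}=\bm{M}(\bm{I}_n-\bm{\Sigma}^{-1}\bm{X}(\bm{X}^T\bm{\Sigma}^{-1}\bm{X})^{-1}\bm{X}^T)\bm{\Sigma}^{-1}\bm{Z}/[\bm{Z}^T\bm{\Sigma}^{-1}(\bm{I}_n-\bm{X}(\bm{X}^T\bm{\Sigma}^{-1}\bm{X})^{-1}\bm{X}^T\bm{\Sigma}^{-1})\bm{Z}]$ with $M_{ii}=2Z_i-1$. *)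

theory Defs
  imports "HOL-Analysis.Analysis"
begin

definition Sig :: "real \<Rightarrow> real^'n^'n \<Rightarrow> real \<Rightarrow> real^'n^'n" where
  "Sig sigma2 S rho2 = sigma2 *\<^sub>R mat 1 + rho2 *\<^sub>R S"

definition XSX :: "real \<Rightarrow> real^'n^'n \<Rightarrow> real^'p^'n \<Rightarrow> real \<Rightarrow> real^'p^'p" where
  "XSX sigma2 S X rho2 = transpose X ** matrix_inv (Sig sigma2 S rho2) ** X"

definition Lmat :: "real \<Rightarrow> real^'n^'n \<Rightarrow> real^'p^'n \<Rightarrow> real \<Rightarrow> real^'n^'n" where
  "Lmat sigma2 S X rho2 = matrix_inv (Sig sigma2 S rho2) **
     (mat 1 - X ** matrix_inv (XSX sigma2 S X rho2) ** transpose X ** matrix_inv (Sig sigma2 S rho2))"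

definition Rmat :: "real \<Rightarrow> real^'n^'n \<Rightarrow> real^'p^'n \<Rightarrow> real \<Rightarrow> real^'n^'n" where
  "Rmat sigma2 S X rho2 = (mat 1 - matrix_inv (Sig sigma2 S rho2) ** X ** matrix_inv (XSX sigma2 S X rho2) ** transpose X)
     ** matrix_inv (Sig sigma2 S rho2)"

definition denomQ :: "real \<Rightarrow> real^'n^'n \<Rightarrow> real^'p^'n \<Rightarrow> real^'n \<Rightarrow> real \<Rightarrow> real" where
  "denomQ sigma2 S X Z rho2 = Z \<bullet> (Lmat sigma2 S X rho2 *v Z)"

definition Delta :: "real \<Rightarrow> real^'n^'n \<Rightarrow> real^'p^'n \<Rightarrow> real^'n \<Rightarrow> real \<Rightarrow> real" where
  "Delta sigma2 S X Z rho2 =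
     (Z \<bullet> ((Lmat sigma2 S X rho2 ** S ** Rmat sigma2 S X rho2) *v Z)) / (denomQ sigma2 S X Z rho2)\<^sup>2"

definition Dfun :: "real \<Rightarrow> real^'n^'n \<Rightarrow> real^'p^'n \<Rightarrow> real^'n \<Rightarrow> real \<Rightarrow> real" where
  "Dfun sigma2 S X Z rho2 = inverse (denomQ sigma2 S X Z rho2)"

end

theory Submission
  imports Defs
begin

text \<open>
  Write \<open>P = \<Sigma>\<^sup>-\<^sup>1 (I - X (X\<^sup>T \<Sigma>\<^sup>-\<^sup>1 X)\<^sup>-\<^sup>1 X\<^sup>T \<Sigma>\<^sup>-\<^sup>1)\<close> and \<open>Q = Z\<^sup>T P Z\<close>.
  Then \<open>X\<^sup>T P = 0\<close> and \<open>\<Sigma> P v - v\<close> lies in the column space of \<open>X\<close>, so the GLS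
  weights \<open>w = P Z / Q\<close> satisfy \<open>y\<^sup>T \<Sigma> w = 1 / Q\<close> for every \<open>y\<close> in the affine space
  \<open>{y. Z\<^sup>T y = 1, X\<^sup>T y = 0}\<close>. Hence \<open>w\<close> minimises \<open>y\<^sup>T \<Sigma> y\<close> there, with minimum
  \<open>1 / Q = D\<close>, and \<open>\<Delta> = w\<^sup>T S w\<close>. As \<open>y\<^sup>T \<Sigma>(\<rho>\<^sup>2) y = \<sigma>\<^sup>2 y\<^sup>T y + \<rho>\<^sup>2 y\<^sup>T S y\<close>, both claims
  are instances of a comparative-statics fact: as the weight \<open>r\<close> grows, the penalty \<open>g\<close>
  at a minimiser of \<open>f + r g\<close> cannot increase, and for \<open>g \<ge> 0\<close> the minimum cannot
  decrease.
\<close>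

lemma penalized_minimizer_antimono:
  fixes f g :: "'a \<Rightarrow> real" and x :: "real \<Rightarrow> 'a"
  assumes feasible: "\<And>r. r \<in> I \<Longrightarrow> x r \<in> C"
    and minimal: "\<And>r y. r \<in> I \<Longrightarrow> y \<in> C \<Longrightarrow> f (x r) + r * g (x r) \<le> f y + r * g y"
  shows "antimono_on I (\<lambda>r. g (x r))"
proof (rule monotone_onI)
  fix r s assume r: "r \<in> I" and s: "s \<in> I" and "r \<le> s"
  show "g (x s) \<le> g (x r)"
  proof (cases "r = s")
    case False
    have "f (x r) + r * g (x r) \<le> f (x s) + r * g (x s)" using minimal r feasible s .
    moreover have "f (x s) + s * g (x s) \<le> f (x r) + s * g (x r)" using minimal s feasible r .
    ultimately have "(s - r) * (g (x s) - g (x r)) \<le> 0" by (simp add: algebra_simps)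
    with \<open>r \<le> s\<close> False show ?thesis by (simp add: mult_le_0_iff)
  qed simp
qed

lemma penalized_minimum_mono:
  fixes f g :: "'a \<Rightarrow> real" and x :: "real \<Rightarrow> 'a"
  assumes feasible: "\<And>r. r \<in> I \<Longrightarrow> x r \<in> C"
    and minimal: "\<And>r y. r \<in> I \<Longrightarrow> y \<in> C \<Longrightarrow> f (x r) + r * g (x r) \<le> f y + r * g y"
    and nonneg: "\<And>y. y \<in> C \<Longrightarrow> 0 \<le> g y"
  shows "mono_on I (\<lambda>r. f (x r) + r * g (x r))"
proof (rule mono_onI)
  fix r s assume r: "r \<in> I" and s: "s \<in> I" and "r \<le> s"
  have "f (x r) + r * g (x r) \<le> f (x s) + r * g (x s)" using minimal r feasible s .
  also have "\<dots> \<le> f (x s) + s * g (x s)"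
    using \<open>r \<le> s\<close> nonneg[OF feasible[OF s]] by (simp add: mult_right_mono)
  finally show "f (x r) + r * g (x r) \<le> f (x s) + s * g (x s)" .
qed

lemma invertible_matrix_inv_right:
  fixes A :: "'a::semiring_1^'n^'m"
  assumes "invertible A"
  shows "A ** matrix_inv A = mat 1"
proof -
  have "\<exists>A'. A ** A' = mat 1 \<and> A' ** A = mat 1" using assms by (simp add: invertible_def)
  then show ?thesis unfolding matrix_inv_def by (rule someI2_ex) simp
qed

lemma invertible_if_pos_def:
  fixes A :: "real^'n^'n"
  assumes "\<And>x. x \<noteq> 0 \<Longrightarrow> 0 < x \<bullet> (A *v x)"
  shows "invertible A"
proof -
  have "x = 0" if "A *v x = 0" for x
    using assms[of x] that by fastforce
  then show ?thesis using matrix_left_invertible_ker invertible_left_inverse by blast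
qed

lemma inner_matrix_vector_transpose:
  fixes A :: "real^'m^'n"
  shows "x \<bullet> (A *v y) = (transpose A *v x) \<bullet> y"
  by (simp add: dot_lmul_matrix)

lemma inner_matrix_vector_symmetric:
  fixes A :: "real^'n^'n"
  assumes "transpose A = A"
  shows "x \<bullet> (A *v y) = (A *v x) \<bullet> y"
  using inner_matrix_vector_transpose[of x A y] assms by simp

definition residual_precision :: "real^'n^'n \<Rightarrow> real^'p^'n \<Rightarrow> real^'n^'n" where
  "residual_precision V X = matrix_inv V **
     (mat 1 - X ** matrix_inv (transpose X ** matrix_inv V ** X) ** transpose X ** matrix_inv V)"

definition gls_weights :: "real^'n^'n \<Rightarrow> real^'p^'n \<Rightarrow> real^'n \<Rightarrow> real^'n" where
  "gls_weights V X z =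
     inverse (z \<bullet> (residual_precision V X *v z)) *\<^sub>R (residual_precision V X *v z)"

lemma residual_precision_apply:
  "residual_precision V X *v v = matrix_inv V *v v - matrix_inv V *v
     (X *v (matrix_inv (transpose X ** matrix_inv V ** X) *v (transpose X *v (matrix_inv V *v v))))"
  by (simp add: residual_precision_def matrix_vector_mult_diff_distrib
      matrix_vector_mult_diff_rdistrib matrix_vector_mul_assoc[symmetric])

lemma matrix_inv_right_apply:
  assumes "invertible A"
  shows "A *v (matrix_inv A *v v) = v"
  by (simp add: matrix_vector_mul_assoc invertible_matrix_inv_right[OF assms])

lemma residual_precision_in_kernel:
  assumes "invertible (transpose X ** matrix_inv V ** X)"
  shows "transpose X *v (residual_precision V X *v v) = 0"
proof -
  have "transpose X *v (matrix_inv V *v (X *v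
          (matrix_inv (transpose X ** matrix_inv V ** X) *v t))) = t" for t
    using matrix_inv_right_apply[OF assms, of t]
    by (simp add: matrix_vector_mul_assoc matrix_mul_assoc)
  then show ?thesis
    by (simp add: residual_precision_apply matrix_vector_mult_diff_distrib)
qed

lemma residual_precision_right_inverse:
  assumes "invertible V"
  obtains w where "V *v (residual_precision V X *v v) = v - X *v w"
  using that matrix_inv_right_apply[OF assms]
  by (simp add: residual_precision_apply matrix_vector_mult_diff_distrib)

lemma inner_residual_precision_kernel:
  assumes "invertible V" and "transpose X *v y = 0"
  shows "y \<bullet> (V *v (residual_precision V X *v v)) = y \<bullet> v"
proof -
  obtain w where "V *v (residual_precision V X *v v) = v - X *v w"
    using residual_precision_right_inverse[OF assms(1)] .
  moreover have "y \<bullet> (X *v w) = 0"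
    using inner_matrix_vector_transpose[of y X w] assms(2) by simp
  ultimately show ?thesis by (simp add: inner_diff_right)
qed

lemma residual_precision_self_adjoint:
  assumes "transpose V = V" "invertible V"
    and "invertible (transpose X ** matrix_inv V ** X)"
  shows "z \<bullet> (residual_precision V X *v v) = (residual_precision V X *v z) \<bullet> v"
proof -
  let ?P = "residual_precision V X"
  have kernel: "(?P *v a) \<bullet> (V *v (?P *v b)) = (?P *v a) \<bullet> b" for a b
    using inner_residual_precision_kernel[OF assms(2) residual_precision_in_kernel[OF assms(3)]] .
  have "z \<bullet> (?P *v v) = (?P *v v) \<bullet> (V *v (?P *v z))"
    by (simp add: kernel inner_commute)
  also have "\<dots> = (V *v (?P *v v)) \<bullet> (?P *v z)"
    by (rule inner_matrix_vector_symmetric[OF assms(1)])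
  also have "\<dots> = (?P *v z) \<bullet> v"
    by (simp add: kernel inner_commute)
  finally show ?thesis .
qed

lemma gls_weights_constraints:
  assumes "invertible (transpose X ** matrix_inv V ** X)"
    and "z \<bullet> (residual_precision V X *v z) \<noteq> 0"
  shows "z \<bullet> gls_weights V X z = 1" "transpose X *v gls_weights V X z = 0"
  using assms residual_precision_in_kernel[OF assms(1)]
  by (simp_all add: gls_weights_def matrix_vector_mult_scaleR)

lemma gls_weights_quadratic_form:
  assumes "invertible V" and "invertible (transpose X ** matrix_inv V ** X)"
  shows "gls_weights V X z \<bullet> (V *v gls_weights V X z)
           = inverse (z \<bullet> (residual_precision V X *v z))"
proof -
  define u where "u = residual_precision V X *v z"
  define q where "q = z \<bullet> u"
  have "u \<bullet> (V *v u) = q"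
    using inner_residual_precision_kernel[OF assms(1) residual_precision_in_kernel[OF assms(2)]]
    by (simp add: u_def q_def inner_commute)
  then have "gls_weights V X z \<bullet> (V *v gls_weights V X z) = inverse q * inverse q * q"
    by (simp add: gls_weights_def u_def[symmetric] q_def[symmetric] matrix_vector_mult_scaleR)
  also have "\<dots> = inverse q"
    by (cases "q = 0") simp_all
  finally show ?thesis by (simp add: u_def q_def)
qed

lemma gls_weights_minimal:
  assumes sym: "transpose V = V" and psd: "\<forall>x. 0 \<le> x \<bullet> (V *v x)"
    and inv: "invertible V" "invertible (transpose X ** matrix_inv V ** X)"
    and feasible: "z \<bullet> y = 1" "transpose X *v y = 0"
  shows "gls_weights V X z \<bullet> (V *v gls_weights V X z) \<le> y \<bullet> (V *v y)"
proof -
  define q where "q = z \<bullet> (residual_precision V X *v z)"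
  let ?w = "gls_weights V X z"
  define e where "e = y - ?w"
  have "y \<bullet> (V *v ?w) = inverse q"
    using inner_residual_precision_kernel[OF inv(1) feasible(2), of z] feasible(1)
    by (simp add: gls_weights_def q_def matrix_vector_mult_scaleR inner_commute)
  moreover have "?w \<bullet> (V *v ?w) = inverse q"
    unfolding q_def by (rule gls_weights_quadratic_form[OF inv])
  ultimately have cross: "e \<bullet> (V *v ?w) = 0"
    by (simp add: e_def inner_diff_left)
  have swap: "?w \<bullet> (V *v e) = e \<bullet> (V *v ?w)"
    by (metis inner_commute inner_matrix_vector_symmetric[OF sym])
  have "y \<bullet> (V *v y) = (?w + e) \<bullet> (V *v (?w + e))"
    by (simp add: e_def)
  also have "\<dots> = ?w \<bullet> (V *v ?w) + 2 * (e \<bullet> (V *v ?w)) + e \<bullet> (V *v e)"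
    by (simp add: matrix_vector_right_distrib inner_add_left inner_add_right swap)
  finally show ?thesis
    using cross psd by simp
qed

lemma Sig_mult_vector: "Sig sigma2 S rho2 *v x = sigma2 *\<^sub>R x + rho2 *\<^sub>R (S *v x)"
  by (simp add: Sig_def matrix_vector_mult_add_rdistrib scaleR_matrix_vector_assoc[symmetric])

lemma inner_Sig: "x \<bullet> (Sig sigma2 S rho2 *v x) = sigma2 * (x \<bullet> x) + rho2 * (x \<bullet> (S *v x))"
  by (simp add: Sig_mult_vector inner_add_right)

lemma transpose_Sig:
  assumes "transpose S = S"
  shows "transpose (Sig sigma2 S rho2) = Sig sigma2 S rho2"
proof -
  have "S $ j $ i = S $ i $ j" for i j
    using arg_cong[OF assms, of "\<lambda>A. A $ i $ j"] by (simp add: transpose_def)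
  then show ?thesis
    by (simp add: Sig_def transpose_def vec_eq_iff mat_def)
qed

lemma Sig_nonneg:
  assumes "sigma2 \<ge> 0" "rho2 \<ge> 0" "\<forall>x. 0 \<le> x \<bullet> (S *v x)"
  shows "0 \<le> x \<bullet> (Sig sigma2 S rho2 *v x)"
  using assms by (simp add: inner_Sig)

lemma Sig_pos_def:
  assumes "sigma2 > 0" "rho2 \<ge> 0" "\<forall>x. 0 \<le> x \<bullet> (S *v x)" and "x \<noteq> 0"
  shows "0 < x \<bullet> (Sig sigma2 S rho2 *v x)"
  using assms by (simp add: inner_Sig add_pos_nonneg)

lemma Lmat_eq_residual_precision: "Lmat sigma2 S X rho2 = residual_precision (Sig sigma2 S rho2) X"
  by (simp add: Lmat_def XSX_def residual_precision_def)

lemma Rmat_eq_Lmat: "Rmat sigma2 S X rho2 = Lmat sigma2 S X rho2"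
  unfolding matrix_eq
  by (simp add: Rmat_def Lmat_def matrix_vector_mult_diff_distrib
      matrix_vector_mult_diff_rdistrib matrix_vector_mul_assoc[symmetric])

lemma Delta_eq_gls_weights:
  assumes "transpose S = S" "invertible (Sig sigma2 S rho2)" "invertible (XSX sigma2 S X rho2)"
  shows "Delta sigma2 S X Z rho2
           = gls_weights (Sig sigma2 S rho2) X Z \<bullet> (S *v gls_weights (Sig sigma2 S rho2) X Z)"
proof -
  let ?P = "residual_precision (Sig sigma2 S rho2) X"
  define u where "u = ?P *v Z"
  have "Z \<bullet> ((Lmat sigma2 S X rho2 ** S ** Rmat sigma2 S X rho2) *v Z) = Z \<bullet> (?P *v (S *v u))"
    by (simp add: Rmat_eq_Lmat Lmat_eq_residual_precision u_def matrix_vector_mul_assoc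
        matrix_mul_assoc)
  also have "\<dots> = u \<bullet> (S *v u)"
    using residual_precision_self_adjoint[OF transpose_Sig[OF assms(1)] assms(2)] assms(3)
    by (simp add: XSX_def u_def)
  finally show ?thesis
    by (simp add: Delta_def denomQ_def Lmat_eq_residual_precision gls_weights_def u_def[symmetric]
        matrix_vector_mult_scaleR power2_eq_square divide_inverse mult_ac)
qed

theorem proposition4:
  fixes Z :: "real^'n" and X :: "real^'p^'n" and S :: "real^'n^'n" and sigma2 :: real
  assumes Zbin: "\<forall>i. Z $ i \<in> {0, 1}"
    and sigma_pos: "sigma2 > 0"
    and S_sym: "transpose S = S"
    and S_psd: "\<forall>x. x \<bullet> (S *v x) \<ge> 0"
    and inv: "\<forall>rho2\<ge>0. invertible (XSX sigma2 S X rho2)"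
    and nz: "\<forall>rho2\<ge>0. denomQ sigma2 S X Z rho2 \<noteq> 0"
  shows "\<forall>r1 r2. 0 \<le> r1 \<and> r1 \<le> r2 \<longrightarrow>
           Delta sigma2 S X Z r2 \<le> Delta sigma2 S X Z r1 \<and>
           Dfun sigma2 S X Z r1 \<le> Dfun sigma2 S X Z r2"
proof -
  define w where "w r = gls_weights (Sig sigma2 S r) X Z" for r
  define C where "C = {y. Z \<bullet> y = 1 \<and> transpose X *v y = 0}"
  define f where "f y = sigma2 * (y \<bullet> y)" for y :: "real^'n"
  define g where "g y = y \<bullet> (S *v y)" for y :: "real^'n"
  have Sig: "invertible (Sig sigma2 S r)" "transpose (Sig sigma2 S r) = Sig sigma2 S r"
    "\<forall>x. 0 \<le> x \<bullet> (Sig sigma2 S r *v x)" if "r \<in> {0..}" for r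
    using invertible_if_pos_def[OF Sig_pos_def[OF sigma_pos _ S_psd]] transpose_Sig[OF S_sym]
      Sig_nonneg[OF less_imp_le[OF sigma_pos] _ S_psd] that
    by auto
  have feasible: "w r \<in> C" if "r \<in> {0..}" for r
    using gls_weights_constraints[of X "Sig sigma2 S r" Z] inv nz that
    by (simp add: C_def w_def XSX_def denomQ_def Lmat_eq_residual_precision)
  have minimal: "f (w r) + r * g (w r) \<le> f y + r * g y" if "r \<in> {0..}" "y \<in> C" for r y
    using gls_weights_minimal[OF Sig(2,3)[OF that(1)] Sig(1)[OF that(1)], of X Z y] inv that
    by (simp add: C_def w_def f_def g_def inner_Sig XSX_def)
  have Delta_Dfun: "Delta sigma2 S X Z r = g (w r)" "Dfun sigma2 S X Z r = f (w r) + r * g (w r)"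
    if "r \<in> {0..}" for r
    using Delta_eq_gls_weights[OF S_sym Sig(1)[OF that], of X Z]
      gls_weights_quadratic_form[OF Sig(1)[OF that], of X Z] inv that
    by (simp_all add: w_def f_def g_def XSX_def Dfun_def denomQ_def Lmat_eq_residual_precision
        inner_Sig)
  have "antimono_on {0..} (\<lambda>r. g (w r))"
    by (rule penalized_minimizer_antimono[OF feasible minimal])
  moreover have "mono_on {0..} (\<lambda>r. f (w r) + r * g (w r))"
    by (rule penalized_minimum_mono[OF feasible minimal]) (use S_psd g_def in auto)
  ultimately show ?thesis
    using Delta_Dfun by (simp add: monotone_on_def)
qed

end
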